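(* Let $W$ be a nonnegative random variable and $\sigma=(\sigma_n)_{n\ge 0}$ a sequence of positive integers. Then $W$ is $\sigma$-summable if and only if both (i) $\sum_n\big(\Pr\{W>1\}\big)^{\sigma_n}<\infty$, and (ii) $\sum_n\int_0^1\big(\Pr\{W>t\}\big)^{\sigma_n}\,dt<\infty$.
   Context: With $(W_n^j)_{n,j}$ independent copies of $W$ and $\Lambda_n=\min_{1\le j\le\sigma_n}W_n^j$, $W$ is called $\sigma$-summable if $\Pr\{\sum_n\Lambda_n<\infty\}>0$. *)

theory Defs
  imports "HOL-Probability.Probability"
begin

text \<open>Canonical probability space carrying a doubly indexed family
  of independent copies (W_n^j) of W: the infinite product of the law of W,
  indexed by pairs (n, j).\<close>
definition copies_space :: "'a measure \<Rightarrow> ('a \<Rightarrow> real) \<Rightarrow> (nat \<times> nat \<Rightarrow> real) measure" where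
  "copies_space M W = PiM UNIV (\<lambda>_::nat \<times> nat. distr M borel W)"

definition Lambda :: "(nat \<Rightarrow> nat) \<Rightarrow> (nat \<times> nat \<Rightarrow> real) \<Rightarrow> nat \<Rightarrow> real" where
  "Lambda \<sigma> \<omega> n = Min ((\<lambda>j. \<omega> (n, j)) ` {1..\<sigma> n})"

definition sigma_summable :: "'a measure \<Rightarrow> ('a \<Rightarrow> real) \<Rightarrow> (nat \<Rightarrow> nat) \<Rightarrow> bool" where
  "sigma_summable M W \<sigma> \<longleftrightarrow>
     measure (copies_space M W)
       {\<omega> \<in> space (copies_space M W). summable (\<lambda>n. Lambda \<sigma> \<omega> n)} > 0"

end

theory Submission
  imports Defs
begin

text \<open>
  Put D = law of W and let \<Lambda>_n be the minimum of \<sigma>_n independent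
  copies of W, so that P{\<Lambda>_n > t} = P{W > t}^(\<sigma>_n) and the \<Lambda>_n are independent.
  Since W \<ge> 0, \<Sigma> \<Lambda>_n converges iff \<Sigma> X_n converges, where X_n = min \<Lambda>_n 1,
  and by the layer-cake formula E X_n = \<integral>_0^1 P{W > t}^(\<sigma>_n) dt.
  For independent [0,1]-valued X_n there is a zero-one dichotomy:
  if \<Sigma> E X_n < \<infinity> then \<Sigma> X_n converges a.s. (monotone convergence), and if
  \<Sigma> E X_n = \<infinity> then \<Sigma> X_n diverges a.s. (because E exp(-\<Sigma>_{n<N} X_n) factorises and
  tends to 0).  Hence \<sigma>-summability is equivalent to condition (ii), and (ii)
  implies (i) because P{W > 1} \<le> P{W > t} for t \<in> [0,1].
\<close>

text \<open>Convexity of exp on [-1,0]: exp(-x) lies below its chord for x \<in> [0,1].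
  This gives E exp(-X) \<le> exp(-c E X) for [0,1]-valued X.\<close>

lemma exp_neg_le_chord:
  fixes x :: real
  assumes "0 \<le> x" "x \<le> 1"
  shows "exp (- x) \<le> 1 - (1 - exp (- 1)) * x"
proof -
  have "exp ((1 - x) *\<^sub>R 0 + x *\<^sub>R (- 1)) \<le> (1 - x) * exp 0 + x * exp (- 1)"
    by (rule convex_onD[OF exp_convex]) (use assms in auto)
  then show ?thesis by (simp add: algebra_simps)
qed

text \<open>A nonnegative series converges iff its terms truncated at 1 do, since a
  convergent series has terms eventually below 1.\<close>

lemma summable_iff_summable_min_one:
  fixes x :: "nat \<Rightarrow> real"
  assumes "\<And>n. 0 \<le> x n"
  shows "summable x \<longleftrightarrow> summable (\<lambda>n. min (x n) 1)"
proof
  assume "summable x"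
  then show "summable (\<lambda>n. min (x n) 1)"
    by (rule summable_comparison_test'[where N=0]) (use assms in auto)
next
  assume sum_min: "summable (\<lambda>n. min (x n) 1)"
  have "eventually (\<lambda>n. min (x n) 1 < 1) sequentially"
    using summable_LIMSEQ_zero[OF sum_min] by (rule order_tendstoD) simp
  then have "eventually (\<lambda>n. min (x n) 1 = x n) sequentially"
    by eventually_elim auto
  from summable_cong[OF this] sum_min show "summable x" by simp
qed

lemma (in prob_space) AE_summable_if_suminf_nn_integral_finite:
  fixes X :: "nat \<Rightarrow> 'a \<Rightarrow> real"
  assumes [measurable]: "\<And>n. X n \<in> borel_measurable M"
    and nonneg: "\<And>n \<omega>. 0 \<le> X n \<omega>"
    and finite: "(\<Sum>n. \<integral>\<^sup>+\<omega>. X n \<omega> \<partial>M) < \<infinity>"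
  shows "AE \<omega> in M. summable (\<lambda>n. X n \<omega>)"
proof -
  have "(\<integral>\<^sup>+\<omega>. (\<Sum>n. ennreal (X n \<omega>)) \<partial>M) = (\<Sum>n. \<integral>\<^sup>+\<omega>. X n \<omega> \<partial>M)"
    by (rule nn_integral_suminf) simp
  then have "AE \<omega> in M. (\<Sum>n. ennreal (X n \<omega>)) \<noteq> \<infinity>"
    using finite by (intro nn_integral_noteq_infinite) auto
  then show ?thesis
    by eventually_elim (auto intro: summable_suminf_not_top nonneg)
qed

text \<open>For independent [0,1]-valued variables the Laplace transform of a partial
  sum factorises, and each factor is at most exp(-c E X_n) with c = 1 - exp(-1).\<close>

lemma (in prob_space) nn_integral_exp_neg_partial_sum_le:
  fixes X :: "nat \<Rightarrow> 'a \<Rightarrow> real"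
  assumes indep: "indep_vars (\<lambda>_. borel) X UNIV"
    and nonneg: "\<And>n \<omega>. 0 \<le> X n \<omega>" and le_one: "\<And>n \<omega>. X n \<omega> \<le> 1"
  shows "(\<integral>\<^sup>+\<omega>. exp (- (\<Sum>n<N. X n \<omega>)) \<partial>M)
           \<le> exp (- (1 - exp (- 1)) * (\<Sum>n<N. expectation (X n)))"
proof -
  define c :: real where "c = 1 - exp (- 1)"
  have [measurable]: "X n \<in> borel_measurable M" for n
    using indep by (auto simp: indep_vars_def)
  have integrable_exp: "integrable M (\<lambda>\<omega>. exp (- X n \<omega>))" for n
    by (rule integrable_const_bound[where B=1]) (auto simp: nonneg)
  have factor_le: "expectation (\<lambda>\<omega>. exp (- X n \<omega>)) \<le> exp (- c * expectation (X n))" for n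
  proof -
    have "integrable M (X n)"
      by (rule integrable_const_bound[where B=1]) (auto simp: nonneg le_one abs_le_iff intro: order_trans[OF _ le_one])
    then have "expectation (\<lambda>\<omega>. exp (- X n \<omega>)) \<le> expectation (\<lambda>\<omega>. 1 - c * X n \<omega>)"
      unfolding c_def by (intro integral_mono integrable_exp) (auto simp: exp_neg_le_chord nonneg le_one)
    also have "\<dots> = 1 - c * expectation (X n)"
      using \<open>integrable M (X n)\<close> by (simp add: prob_space)
    also have "\<dots> \<le> exp (- c * expectation (X n))"
      using exp_ge_add_one_self[of "- c * expectation (X n)"] by simp
    finally show ?thesis .
  qed
  have indep_exp: "indep_vars (\<lambda>_. borel) (\<lambda>n \<omega>. ennreal (exp (- X n \<omega>))) {..<N}"
    by (rule indep_vars_compose2[OF indep_vars_subset[OF indep]]) auto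
  have "(\<integral>\<^sup>+\<omega>. exp (- (\<Sum>n<N. X n \<omega>)) \<partial>M) = (\<integral>\<^sup>+\<omega>. (\<Prod>n<N. ennreal (exp (- X n \<omega>))) \<partial>M)"
    by (simp add: exp_sum[symmetric] sum_negf prod_ennreal)
  also have "\<dots> = (\<Prod>n<N. \<integral>\<^sup>+\<omega>. ennreal (exp (- X n \<omega>)) \<partial>M)"
    by (rule indep_vars_nn_integral[OF _ indep_exp]) auto
  also have "\<dots> = (\<Prod>n<N. ennreal (expectation (\<lambda>\<omega>. exp (- X n \<omega>))))"
    by (intro prod.cong refl nn_integral_eq_integral integrable_exp) auto
  also have "\<dots> \<le> (\<Prod>n<N. ennreal (exp (- c * expectation (X n))))"
    by (intro prod_mono_ennreal ennreal_leI factor_le)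
  also have "\<dots> = exp (- c * (\<Sum>n<N. expectation (X n)))"
    by (simp add: prod_ennreal exp_sum[symmetric] sum_negf sum_distrib_left)
  finally show ?thesis unfolding c_def .
qed

text \<open>Partial sums of a divergent nonnegative series are unbounded, so
  exp(-c \<Sigma>_{n<N} a_n) eventually drops below any \<epsilon> > 0.\<close>

lemma exists_exp_neg_partial_sum_less:
  fixes a :: "nat \<Rightarrow> real"
  assumes nonneg: "\<And>n. 0 \<le> a n" and diverges: "\<not> summable a"
    and "0 < c" "0 < \<epsilon>"
  shows "\<exists>N. exp (- c * (\<Sum>n<N. a n)) < \<epsilon>"
proof -
  obtain N where "- ln \<epsilon> / c < (\<Sum>n<N. a n)"
  proof (rule ccontr)
    assume "\<not> thesis"
    with that have "summable a"
      by (intro summableI_nonneg_bounded[where x="- ln \<epsilon> / c"]) (auto simp: nonneg intro: leI)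
    with diverges show False ..
  qed
  then have "c * (- ln \<epsilon> / c) < c * (\<Sum>n<N. a n)"
    using \<open>0 < c\<close> by (rule mult_strict_left_mono)
  then have "- c * (\<Sum>n<N. a n) < ln \<epsilon>"
    using \<open>0 < c\<close> by simp
  then show ?thesis
    using \<open>0 < \<epsilon>\<close> by (metis exp_less_cancel_iff exp_ln)
qed

text \<open>On the convergence event the
  decreasing limit of exp(-\<Sigma>_{n<N} X_n) is positive, yet its integral is 0.\<close>

lemma (in prob_space) AE_not_summable_if_not_summable_expectation:
  fixes X :: "nat \<Rightarrow> 'a \<Rightarrow> real"
  assumes indep: "indep_vars (\<lambda>_. borel) X UNIV"
    and nonneg: "\<And>n \<omega>. 0 \<le> X n \<omega>" and le_one: "\<And>n \<omega>. X n \<omega> \<le> 1"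
    and diverges: "\<not> summable (\<lambda>n. expectation (X n))"
  shows "AE \<omega> in M. \<not> summable (\<lambda>n. X n \<omega>)"
proof -
  define c :: real where "c = 1 - exp (- 1)"
  have "0 < c" unfolding c_def by simp
  define F where "F N \<omega> = ennreal (exp (- (\<Sum>n<N. X n \<omega>)))" for N \<omega>
  have [measurable]: "X n \<in> borel_measurable M" for n
    using indep by (auto simp: indep_vars_def)
  have F_measurable [measurable]: "F N \<in> borel_measurable M" for N
    unfolding F_def by measurable
  have F_bound: "(\<integral>\<^sup>+\<omega>. F N \<omega> \<partial>M) \<le> exp (- c * (\<Sum>n<N. expectation (X n)))" for N
    unfolding F_def c_def by (rule nn_integral_exp_neg_partial_sum_le[OF indep nonneg le_one])
  have "decseq F"
    by (rule decseq_SucI) (auto simp: le_fun_def F_def nonneg)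
  then have "(\<integral>\<^sup>+\<omega>. (INF N. F N \<omega>) \<partial>M) = (INF N. \<integral>\<^sup>+\<omega>. F N \<omega> \<partial>M)"
    by (rule nn_integral_monotone_convergence_INF_decseq[OF _ F_measurable])
       (rule le_less_trans[OF F_bound], simp)
  also have "\<dots> = 0"
  proof (rule antisym[OF ennreal_le_epsilon zero_le])
    fix \<epsilon> :: real assume "0 < \<epsilon>"
    obtain N where small: "exp (- c * (\<Sum>n<N. expectation (X n))) < \<epsilon>"
      using exists_exp_neg_partial_sum_less[OF _ diverges \<open>0 < c\<close> \<open>0 < \<epsilon>\<close>] nonneg
      by auto
    have "(INF N. \<integral>\<^sup>+\<omega>. F N \<omega> \<partial>M) \<le> (\<integral>\<^sup>+\<omega>. F N \<omega> \<partial>M)"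
      by (rule INF_lower) simp
    also have "\<dots> \<le> ennreal \<epsilon>"
      using F_bound[of N] small by (meson ennreal_leI less_imp_le order_trans)
    finally show "(INF N. \<integral>\<^sup>+\<omega>. F N \<omega> \<partial>M) \<le> 0 + ennreal \<epsilon>" by simp
  qed
  finally have "AE \<omega> in M. (INF N. F N \<omega>) = 0"
    by (subst (asm) nn_integral_0_iff_AE) auto
  then show ?thesis
  proof eventually_elim
    case (elim \<omega>)
    show "\<not> summable (\<lambda>n. X n \<omega>)"
    proof
      assume "summable (\<lambda>n. X n \<omega>)"
      then have "(\<Sum>n<N. X n \<omega>) \<le> (\<Sum>n. X n \<omega>)" for N
        by (rule sum_le_suminf) (auto simp: nonneg)
      then have "ennreal (exp (- (\<Sum>n. X n \<omega>))) \<le> F N \<omega>" for N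
        unfolding F_def by (intro ennreal_leI) simp
      then have "ennreal (exp (- (\<Sum>n. X n \<omega>))) \<le> (INF N. F N \<omega>)"
        by (rule INF_greatest)
      with elim show False by simp
    qed
  qed
qed

lemma sets_Collect_summable:
  fixes X :: "nat \<Rightarrow> 'a \<Rightarrow> real"
  assumes [measurable]: "\<And>n. X n \<in> borel_measurable M"
  shows "{\<omega> \<in> space M. summable (\<lambda>n. X n \<omega>)} \<in> sets M"
proof -
  have "{\<omega> \<in> space M. summable (\<lambda>n. X n \<omega>)} = {\<omega> \<in> space M. Cauchy (\<lambda>N. \<Sum>n<N. X n \<omega>)}"
    unfolding summable_iff_convergent Cauchy_convergent_iff ..
  also have "\<dots> \<in> sets M"
    by measurable
  finally show ?thesis .
qed

lemma (in prob_space) prob_summable_pos_iff: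
  fixes X :: "nat \<Rightarrow> 'a \<Rightarrow> real"
  assumes indep: "indep_vars (\<lambda>_. borel) X UNIV"
    and nonneg: "\<And>n \<omega>. 0 \<le> X n \<omega>" and le_one: "\<And>n \<omega>. X n \<omega> \<le> 1"
  shows "0 < prob {\<omega> \<in> space M. summable (\<lambda>n. X n \<omega>)} \<longleftrightarrow> (\<Sum>n. \<integral>\<^sup>+\<omega>. X n \<omega> \<partial>M) < \<infinity>"
proof
  have [measurable]: "X n \<in> borel_measurable M" for n
    using indep by (auto simp: indep_vars_def)
  have summable_event: "{\<omega> \<in> space M. summable (\<lambda>n. X n \<omega>)} \<in> sets M"
    by (rule sets_Collect_summable) simp
  have expectation_eq: "(\<integral>\<^sup>+\<omega>. X n \<omega> \<partial>M) = ennreal (expectation (X n))" for n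
    by (intro nn_integral_eq_integral integrable_const_bound[where B=1])
       (auto simp: nonneg le_one)
  show "(\<Sum>n. \<integral>\<^sup>+\<omega>. X n \<omega> \<partial>M) < \<infinity>" if "0 < prob {\<omega> \<in> space M. summable (\<lambda>n. X n \<omega>)}"
  proof (rule ccontr)
    assume "\<not> (\<Sum>n. \<integral>\<^sup>+\<omega>. X n \<omega> \<partial>M) < \<infinity>"
    then have "\<not> summable (\<lambda>n. expectation (X n))"
      using ennreal_suminf_neq_top by (force simp: expectation_eq nonneg top.not_eq_extremum)
    then have "AE \<omega> in M. \<not> summable (\<lambda>n. X n \<omega>)"
      by (rule AE_not_summable_if_not_summable_expectation[OF indep nonneg le_one])
    then have "prob {\<omega> \<in> space M. summable (\<lambda>n. X n \<omega>)} = 0"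
      using prob_Collect_eq_0[OF summable_event] by simp
    with that show False by simp
  qed
  show "0 < prob {\<omega> \<in> space M. summable (\<lambda>n. X n \<omega>)}" if "(\<Sum>n. \<integral>\<^sup>+\<omega>. X n \<omega> \<partial>M) < \<infinity>"
  proof -
    have "AE \<omega> in M. summable (\<lambda>n. X n \<omega>)"
      by (rule AE_summable_if_suminf_nn_integral_finite[OF _ nonneg that]) simp
    then have "prob {\<omega> \<in> space M. summable (\<lambda>n. X n \<omega>)} = 1"
      using prob_Collect_eq_1[OF summable_event] by simp
    then show ?thesis by simp
  qed
qed

lemma lborel_unit_interval_below:
  fixes v :: real
  shows "emeasure lborel ({0..1} \<inter> {..<v}) = ennreal (min (max v 0) 1)"
proof -
  consider "v \<le> 0" | "0 < v" "v \<le> 1" | "1 < v" by linarith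
  then show ?thesis
  proof cases
    case 1
    then have "{0..1} \<inter> {..<v} = {}" by auto
    then show ?thesis using 1 by simp
  next
    case 2
    then have "{0..1} \<inter> {..<v} = {0..<v}" by auto
    then show ?thesis using 2 by simp
  next
    case 3
    then have "{0..1} \<inter> {..<v} = {0..1}" by auto
    then show ?thesis using 3 by simp
  qed
qed

lemma (in sigma_finite_measure) nn_integral_clamp_eq_tail_integral:
  fixes X :: "'a \<Rightarrow> real"
  assumes [measurable]: "X \<in> borel_measurable M"
  shows "(\<integral>\<^sup>+\<omega>. ennreal (min (max (X \<omega>) 0) 1) \<partial>M)
           = (\<integral>\<^sup>+t\<in>{0..1}. emeasure M {\<omega> \<in> space M. t < X \<omega>} \<partial>lborel)"
proof -
  interpret pair_sigma_finite M lborel ..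
  have "(\<integral>\<^sup>+\<omega>. ennreal (min (max (X \<omega>) 0) 1) \<partial>M)
          = (\<integral>\<^sup>+\<omega>. (\<integral>\<^sup>+t. indicator {0..1} t * indicator {\<omega> \<in> space M. t < X \<omega>} \<omega> \<partial>lborel) \<partial>M)"
  proof (rule nn_integral_cong)
    fix \<omega> assume "\<omega> \<in> space M"
    then have "(\<lambda>t. indicator {0..1} t * indicator {\<omega> \<in> space M. t < X \<omega>} \<omega>)
                 = (indicator ({0..1} \<inter> {..<X \<omega>}) :: real \<Rightarrow> ennreal)"
      by (auto simp: fun_eq_iff split: split_indicator)
    then show "ennreal (min (max (X \<omega>) 0) 1)
          = (\<integral>\<^sup>+t. indicator {0..1} t * indicator {\<omega> \<in> space M. t < X \<omega>} \<omega> \<partial>lborel)"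
      by (simp add: lborel_unit_interval_below)
  qed
  also have "\<dots> = (\<integral>\<^sup>+t. (\<integral>\<^sup>+\<omega>. indicator {0..1} t * indicator {\<omega> \<in> space M. t < X \<omega>} \<omega> \<partial>M) \<partial>lborel)"
    by (rule Fubini'[symmetric]) measurable
  also have "\<dots> = (\<integral>\<^sup>+t\<in>{0..1}. emeasure M {\<omega> \<in> space M. t < X \<omega>} \<partial>lborel)"
    by (intro nn_integral_cong) (simp add: nn_integral_cmult mult.commute)
  finally show ?thesis .
qed

locale iid_copies =
  fixes D :: "real measure" and \<sigma> :: "nat \<Rightarrow> nat"
  assumes prob_space_D: "prob_space D" and sets_D: "sets D = sets borel"
    and \<sigma>_pos: "\<And>n. 0 < \<sigma> n"
begin

sublocale C: product_prob_space "\<lambda>_::nat \<times> nat. D" UNIV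
  using prob_space_D
  by (simp add: product_prob_space_def product_prob_space_axioms_def
      product_sigma_finite_def prob_space_imp_sigma_finite)

abbreviation Copies :: "(nat \<times> nat \<Rightarrow> real) measure" where
  "Copies \<equiv> PiM UNIV (\<lambda>_::nat \<times> nat. D)"

lemma coordinate_measurable [measurable]: "(\<lambda>\<omega>. \<omega> i) \<in> borel_measurable Copies"
  using measurable_component_singleton[of i UNIV "\<lambda>_. D"] sets_D
  by (simp add: measurable_cong_sets[OF refl sets_D])

lemma coordinates_indep: "C.indep_vars (\<lambda>_. D) (\<lambda>i \<omega>. \<omega> i) UNIV"
proof -
  have "distr Copies Copies (\<lambda>\<omega>. \<lambda>i\<in>UNIV. \<omega> i) = PiM UNIV (\<lambda>i. distr Copies D (\<lambda>\<omega>. \<omega> i))"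
    by (simp add: C.PiM_component restrict_UNIV distr_id2)
  then show ?thesis
    by (subst C.indep_vars_iff_distr_eq_PiM) (auto intro: measurable_component_singleton)
qed

lemma Lambda_measurable [measurable]: "(\<lambda>\<omega>. Lambda \<sigma> \<omega> n) \<in> borel_measurable Copies"
  unfolding Lambda_def by (intro borel_measurable_Min) auto

text \<open>The block minima are independent, since they are functions of disjoint
  blocks of coordinates.\<close>

lemma Lambda_indep: "C.indep_vars (\<lambda>_. borel) (\<lambda>n \<omega>. Lambda \<sigma> \<omega> n) UNIV"
proof -
  define block where "block n = {n} \<times> {1..\<sigma> n}" for n
  have "disjoint_family_on block UNIV"
    unfolding block_def disjoint_family_on_def by blast
  then have "C.indep_vars (\<lambda>n. PiM (block n) (\<lambda>_. D)) (\<lambda>n \<omega>. restrict \<omega> (block n)) UNIV"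
    using C.indep_vars_restrict[OF coordinates_indep] by simp
  then have "C.indep_vars (\<lambda>_. borel) (\<lambda>n \<omega>. Min ((\<lambda>j. restrict \<omega> (block n) (n, j)) ` {1..\<sigma> n})) UNIV"
  proof (rule C.indep_vars_compose2[where Y="\<lambda>n f. Min ((\<lambda>j. f (n, j)) ` {1..\<sigma> n})"])
    fix n
    have "(\<lambda>f. f (n, j)) \<in> borel_measurable (PiM (block n) (\<lambda>_. D))" if "j \<in> {1..\<sigma> n}" for j
      using measurable_component_singleton[of "(n, j)" "block n" "\<lambda>_. D"] that
      by (simp add: block_def measurable_cong_sets[OF refl sets_D])
    then show "(\<lambda>f. Min ((\<lambda>j. f (n, j)) ` {1..\<sigma> n})) \<in> borel_measurable (PiM (block n) (\<lambda>_. D))"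
      by (intro borel_measurable_Min) auto
  qed
  moreover have "(\<lambda>\<omega>. Min ((\<lambda>j. restrict \<omega> (block n) (n, j)) ` {1..\<sigma> n})) = (\<lambda>\<omega>. Lambda \<sigma> \<omega> n)" for n
    unfolding Lambda_def block_def by (intro ext arg_cong[where f=Min] image_cong) auto
  ultimately show ?thesis by simp
qed

lemma prob_Lambda_greater:
  "C.prob {\<omega> \<in> space Copies. t < Lambda \<sigma> \<omega> n} = measure D {t<..} ^ \<sigma> n"
proof -
  define block where "block = {n} \<times> {1..\<sigma> n}"
  have block: "block \<noteq> {}" "finite block" "card block = \<sigma> n"
    using \<sigma>_pos[of n] by (auto simp: block_def)
  have "{\<omega> \<in> space Copies. t < Lambda \<sigma> \<omega> n} = (\<Inter>i\<in>block. (\<lambda>\<omega>. \<omega> i) -` {t<..} \<inter> space Copies)"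
    using \<sigma>_pos[of n] by (auto simp: Lambda_def block_def)
  then have "C.prob {\<omega> \<in> space Copies. t < Lambda \<sigma> \<omega> n}
               = (\<Prod>i\<in>block. C.prob ((\<lambda>\<omega>. \<omega> i) -` {t<..} \<inter> space Copies))"
    using C.indep_varsD[OF coordinates_indep block(1,2)] sets_D by simp
  also have "\<dots> = (\<Prod>i\<in>block. measure D {t<..})"
  proof (rule prod.cong[OF refl])
    fix i
    have "measure D {t<..} = measure (distr Copies D (\<lambda>\<omega>. \<omega> i)) {t<..}"
      by (simp add: C.PiM_component)
    also have "\<dots> = C.prob ((\<lambda>\<omega>. \<omega> i) -` {t<..} \<inter> space Copies)"
      by (rule measure_distr) (auto simp: sets_D intro: measurable_component_singleton)
    finally show "C.prob ((\<lambda>\<omega>. \<omega> i) -` {t<..} \<inter> space Copies) = measure D {t<..}" ..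
  qed
  also have "\<dots> = measure D {t<..} ^ \<sigma> n"
    using block by simp
  finally show ?thesis .
qed

lemma AE_Lambda_nonneg:
  assumes "AE x in D. 0 \<le> x"
  shows "AE \<omega> in Copies. \<forall>n. 0 \<le> Lambda \<sigma> \<omega> n"
proof -
  have "AE \<omega> in Copies. 0 \<le> \<omega> i" for i
    using C.AE_component[of i "\<lambda>x. 0 \<le> x", OF _ assms] by simp
  then have "AE \<omega> in Copies. \<forall>i. 0 \<le> \<omega> i"
    by (subst AE_all_countable) auto
  then show ?thesis
    by eventually_elim (use \<sigma>_pos in \<open>auto simp: Lambda_def Min_ge_iff Suc_le_eq\<close>)
qed

lemma nn_integral_clamped_Lambda:
  "(\<integral>\<^sup>+\<omega>. ennreal (min (max (Lambda \<sigma> \<omega> n) 0) 1) \<partial>Copies)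
     = (\<integral>\<^sup>+t\<in>{0..1}. ennreal (measure D {t<..} ^ \<sigma> n) \<partial>lborel)"
  by (simp add: C.nn_integral_clamp_eq_tail_integral C.emeasure_eq_measure prob_Lambda_greater)

theorem prob_summable_Lambda_pos_iff:
  assumes "AE x in D. 0 \<le> x"
  shows "0 < C.prob {\<omega> \<in> space Copies. summable (\<lambda>n. Lambda \<sigma> \<omega> n)}
           \<longleftrightarrow> (\<Sum>n. \<integral>\<^sup>+t\<in>{0..1}. ennreal (measure D {t<..} ^ \<sigma> n) \<partial>lborel) < \<infinity>"
proof -
  define X where "X n \<omega> = min (max (Lambda \<sigma> \<omega> n) 0) 1" for n \<omega>
  have indep_X: "C.indep_vars (\<lambda>_. borel) X UNIV"
    unfolding X_def by (rule C.indep_vars_compose2[OF Lambda_indep]) measurable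
  have "AE \<omega> in Copies. summable (\<lambda>n. Lambda \<sigma> \<omega> n) \<longleftrightarrow> summable (\<lambda>n. X n \<omega>)"
    using AE_Lambda_nonneg[OF assms]
  proof eventually_elim
    case (elim \<omega>)
    then have "X n \<omega> = min (Lambda \<sigma> \<omega> n) 1" for n
      by (simp add: X_def)
    with elim show ?case
      using summable_iff_summable_min_one[of "\<lambda>n. Lambda \<sigma> \<omega> n"] by simp
  qed
  then have "C.prob {\<omega> \<in> space Copies. summable (\<lambda>n. Lambda \<sigma> \<omega> n)}
               = C.prob {\<omega> \<in> space Copies. summable (\<lambda>n. X n \<omega>)}"
    by (intro C.finite_measure_eq_AE sets_Collect_summable) (auto simp: X_def)
  also have "0 < \<dots> \<longleftrightarrow> (\<Sum>n. \<integral>\<^sup>+\<omega>. X n \<omega> \<partial>Copies) < \<infinity>"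
    by (rule C.prob_summable_pos_iff[OF indep_X]) (auto simp: X_def)
  finally show ?thesis
    by (simp add: X_def nn_integral_clamped_Lambda)
qed

end

lemma le_nn_integral_unit_interval:
  fixes f :: "real \<Rightarrow> ennreal"
  assumes "\<And>t. t \<in> {0..1} \<Longrightarrow> c \<le> f t"
  shows "c \<le> (\<integral>\<^sup>+t\<in>{0..1}. f t \<partial>lborel)"
proof -
  have "c = (\<integral>\<^sup>+t\<in>{0..1::real}. c \<partial>lborel)"
    by (simp add: nn_integral_cmult_indicator)
  also have "\<dots> \<le> (\<integral>\<^sup>+t\<in>{0..1}. f t \<partial>lborel)"
    using assms by (intro nn_integral_mono) (auto split: split_indicator)
  finally show ?thesis .
qed

lemma summable_if_ennreal_bounded:
  fixes f :: "nat \<Rightarrow> real"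
  assumes "\<And>n. 0 \<le> f n" "\<And>n. ennreal (f n) \<le> g n" "(\<Sum>n. g n) < \<infinity>"
  shows "summable f"
proof (rule summable_suminf_not_top)
  have "(\<Sum>n. ennreal (f n)) \<le> (\<Sum>n. g n)"
    using assms(2) by (rule suminf_le) simp_all
  with assms(3) show "(\<Sum>n. ennreal (f n)) \<noteq> \<top>"
    by (auto simp: top_unique)
qed (use assms(1) in simp)

theorem proposition4p1:
  fixes M :: "'a measure" and W :: "'a \<Rightarrow> real" and \<sigma> :: "nat \<Rightarrow> nat"
  assumes "prob_space M"
    and "W \<in> borel_measurable M"
    and "\<forall>x\<in>space M. 0 \<le> W x"
    and "\<forall>n. 0 < \<sigma> n"
  shows "sigma_summable M W \<sigma> \<longleftrightarrow>
    summable (\<lambda>n. (measure M {x \<in> space M. W x > 1}) ^ \<sigma> n) \<and>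
    (\<Sum>n. \<integral>\<^sup>+ t\<in>{0..1}. ennreal ((measure M {x \<in> space M. W x > t}) ^ \<sigma> n) \<partial>lborel) < \<infinity>"
proof -
  interpret M: prob_space M by fact
  interpret iid_copies "distr M borel W" \<sigma>
    using M.prob_space_distr[OF assms(2)] assms(4) by (intro iid_copies.intro) simp_all
  let ?p = "\<lambda>t. measure M {x \<in> space M. W x > t}"
  have tail: "measure (distr M borel W) {t<..} = ?p t" for t
    using assms(2) by (subst measure_distr) (auto simp: vimage_def Int_def conj_commute)
  have nonneg: "AE x in distr M borel W. 0 \<le> x"
    using assms(2,3) by (subst AE_distr_iff) auto
  have "sigma_summable M W \<sigma> \<longleftrightarrow> (\<Sum>n. \<integral>\<^sup>+ t\<in>{0..1}. ennreal (?p t ^ \<sigma> n) \<partial>lborel) < \<infinity>"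
    using prob_summable_Lambda_pos_iff[OF nonneg]
    by (simp add: sigma_summable_def copies_space_def tail)
  moreover have "?p 1 ^ \<sigma> n \<le> ?p t ^ \<sigma> n" if "t \<in> {0..1}" for t n
    using that assms(2) by (intro power_mono M.finite_measure_mono) auto
  then have "(\<Sum>n. \<integral>\<^sup>+ t\<in>{0..1}. ennreal (?p t ^ \<sigma> n) \<partial>lborel) < \<infinity>
               \<Longrightarrow> summable (\<lambda>n. ?p 1 ^ \<sigma> n)"
    by (intro summable_if_ennreal_bounded[where g="\<lambda>n. \<integral>\<^sup>+ t\<in>{0..1}. ennreal (?p t ^ \<sigma> n) \<partial>lborel"]
        le_nn_integral_unit_interval ennreal_leI) auto
  ultimately show ?thesis by blast
qed

end
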